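(* Let $l,u\in\mathbb{R}^n$ with $l\le u$ and let $H:\prod_{i=1}^n[l_i,u_i]\to\mathbb{R}$ be continuous submodular. Let $R(x)=\sum_{i=1}^n R_i(x_i)$ be separable with each $R_i$ strictly increasing. Let $A=(A_1,\dots,A_n)$ be an interpolation mapping with $A_i:[k_i]\to[l_i,u_i]$, and define $H^\delta(x)=H(A(x))$, $R^\delta_i(x_i)=R_i(A_i(x_i))$, $R^\delta(x)=\sum_i R^\delta_i(x_i)$ on $\prod_{i=1}^n[k_i]$. For $1\le j\le k_i-1$ let $a_{ij}(t)=\tfrac12 t^2\,[R_i^\delta(j)-R_i^\delta(j-1)]$. Then the problem \[ \min_{\rho\in\prod_{i=1}^n\mathbb{R}_\downarrow^{k_i-1}}\; h_\downarrow(\rho)+\sum_{i=1}^n\sum_{j=1}^{k_i-1} a_{ij}(\rho_i(j)) \] is a convex optimization problem, and from its minimizer $\rho^*$ one recovers, for every $\lambda\in\mathbb{R}$, a minimizer $x(\lambda)$ of \[ \min_{x\in\prod_{i=1}^n[k_i]}\; H^\delta(x)+\lambda R^\delta(x), \] namely $x(\lambda)_i=\max\{j: 1\le j\le k_i-1,\ \rho^*_i(j)\ge\lambda\}$, and $x(\lambda)_i=0$ if $\rho^*_i(j)<\lambda$ for all $j$.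
   Context: $[k]=\{0,1,\dots,k-1\}$. A function $g$ on a lattice (subset of $\mathbb{R}^n$ closed under coordinatewise max $\vee$ and min $\wedge$) is submodular if $g(x)+g(y)\ge g(x\vee y)+g(x\wedge y)$; "continuous submodular" means this holds on the box. The interpolation maps $A_i$ are increasing with $A_i(0)=l_i$, $A_i(k_i-1)=u_i$ (so $H^\delta$ is lattice submodular on $\prod_i[k_i]$). $\mathbb{R}_\downarrow^{m}$ is the set of $z\in\mathbb{R}^m$ with $z_1\ge z_2\ge\dots\ge z_m$; for $\rho=(\rho_1,\dots,\rho_n)\in\prod_i\mathbb{R}_\downarrow^{k_i-1}$, $\rho_i(j)$ denotes the $j$-th coordinate of $\rho_i$, $j=1,\dots,k_i-1$. The extension $h_\downarrow$ of $H^\delta$ is defined as follows: list all pairs $(i,j)$, $1\le j\le k_i-1$, as $(i_1,j_1),\dots,(i_N,j_N)$ with $N=\sum_i(k_i-1)$ so that $\rho_{i_1}(j_1)\ge\rho_{i_2}(j_2)\ge\dots\ge\rho_{i_N}(j_N)$ and, for each $i$, the pairs $(i,1),(i,2),\dots$ appear in this order; set $x^0=0$ and $x^m=x^{m-1}+e_{i_m}$; then $h_\downarrow(\rho)=H^\delta(0)+\sum_{m=1}^N\rho_{i_m}(j_m)\,[H^\delta(x^m)-H^\delta(x^{m-1})]$. This $h_\downarrow$ is convex and agrees with $H^\delta$ on points $\rho$ with entries in $\{0,1\}$ (identifying $x$ with $\rho_i(j)=1$ iff $j\le x_i$). *)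

theory Defs
  imports "HOL-Analysis.Analysis"
begin

text \<open>Coordinates are indexed by a finite type 'n (the index set {1..n}).
  Discrete points x in prod_i [k_i] are functions 'n => nat with x i < k i.
  A point rho in prod_i R_down^(k_i - 1) is a function 'n => nat => real, where
  only the entries rho i j with 1 <= j <= k i - 1 are meaningful.\<close>

definition grid :: "('n \<Rightarrow> nat) \<Rightarrow> ('n \<Rightarrow> nat) set" where
  "grid k = {x. \<forall>i. x i < k i}"

definition dec_set :: "('n \<Rightarrow> nat) \<Rightarrow> ('n \<Rightarrow> nat \<Rightarrow> real) set" where
  "dec_set k = {\<rho>. \<forall>i j. 1 \<le> j \<and> j + 1 \<le> k i - 1 \<longrightarrow> \<rho> i j \<ge> \<rho> i (j + 1)}"

definition submodular_on :: "('a::lattice) set \<Rightarrow> ('a \<Rightarrow> real) \<Rightarrow> bool" where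
  "submodular_on S g \<longleftrightarrow>
     (\<forall>x\<in>S. \<forall>y\<in>S. g x + g y \<ge> g (sup x y) + g (inf x y))"

definition comb :: "real \<Rightarrow> ('n \<Rightarrow> nat \<Rightarrow> real) \<Rightarrow> ('n \<Rightarrow> nat \<Rightarrow> real) \<Rightarrow> ('n \<Rightarrow> nat \<Rightarrow> real)" where
  "comb t \<rho> \<sigma> = (\<lambda>i j. t * \<rho> i j + (1 - t) * \<sigma> i j)"

definition fconvex :: "('n \<Rightarrow> nat \<Rightarrow> real) set \<Rightarrow> bool" where
  "fconvex D \<longleftrightarrow> (\<forall>\<rho>\<in>D. \<forall>\<sigma>\<in>D. \<forall>t::real. 0 \<le> t \<and> t \<le> 1 \<longrightarrow> comb t \<rho> \<sigma> \<in> D)"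

definition fconvex_on :: "('n \<Rightarrow> nat \<Rightarrow> real) set \<Rightarrow> (('n \<Rightarrow> nat \<Rightarrow> real) \<Rightarrow> real) \<Rightarrow> bool" where
  "fconvex_on D f \<longleftrightarrow> (\<forall>\<rho>\<in>D. \<forall>\<sigma>\<in>D. \<forall>t::real. 0 \<le> t \<and> t \<le> 1 \<longrightarrow>
      f (comb t \<rho> \<sigma>) \<le> t * f \<rho> + (1 - t) * f \<sigma>)"

definition valid_order :: "('n \<Rightarrow> nat) \<Rightarrow> ('n \<Rightarrow> nat \<Rightarrow> real) \<Rightarrow> ('n \<times> nat) list \<Rightarrow> bool" where
  "valid_order k \<rho> L \<longleftrightarrow>
     distinct L \<and> set L = {(i, j). 1 \<le> j \<and> j \<le> k i - 1} \<and>
     (\<forall>a b. a < b \<and> b < length L \<longrightarrow>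
        \<rho> (fst (L ! a)) (snd (L ! a)) \<ge> \<rho> (fst (L ! b)) (snd (L ! b))) \<and>
     (\<forall>a b. a < length L \<and> b < length L \<and> fst (L ! a) = fst (L ! b) \<and>
        snd (L ! a) < snd (L ! b) \<longrightarrow> a < b)"

text \<open>x^m: x^0 = 0, x^m = x^(m-1) + e_(i_m).\<close>
definition chain_pt :: "('n \<times> nat) list \<Rightarrow> nat \<Rightarrow> ('n \<Rightarrow> nat)" where
  "chain_pt L m = (\<lambda>i. length (filter (\<lambda>p. fst p = i) (take m L)))"

definition hdown :: "(('n \<Rightarrow> nat) \<Rightarrow> real) \<Rightarrow> ('n \<Rightarrow> nat) \<Rightarrow> ('n \<Rightarrow> nat \<Rightarrow> real) \<Rightarrow> real" where
  "hdown Hd k \<rho> =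
     (let L = (SOME L. valid_order k \<rho> L) in
       Hd (\<lambda>_. 0) + (\<Sum>m<length L. \<rho> (fst (L ! m)) (snd (L ! m)) *
          (Hd (chain_pt L (Suc m)) - Hd (chain_pt L m))))"

end

(*
  A word w over the coordinates describes a monotone lattice path from a base point to the top
  corner of the grid; along a path, h_down is the sum of weight times increment of Hd.  For a
  decreasing rho, the path that takes the steps in order of decreasing weight has the largest
  such sum among all paths: by submodularity, exchanging two adjacent steps into weight order can
  only increase it.  So h_down is a pointwise maximum of linear functions on the convex set of
  decreasing vectors, hence convex; the quadratic term has non-negative weights since each R_i is
  increasing.

  For the rounding, let x be the level point of the minimiser at lam and y any grid point.  For
  small eps > 0 the perturbation rho + eps (unary y - unary x) is still decreasing, and its level
  point at lam - eps is still x.  Along its sorted path unary x gains exactly Hd x - Hd 0, so h_down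
  increases by at most eps (Hd y - Hd x), while the quadratic term increases by at most
  eps lam (R y - R x) + O(eps^2).  Minimality of rho lets eps tend to 0.
*)

theory Submission
  imports Defs "HOL-Library.List_Lexorder"
begin

abbreviation incr :: "('n \<Rightarrow> nat) \<Rightarrow> 'n \<Rightarrow> ('n \<Rightarrow> nat)" where
  "incr b i \<equiv> b(i := Suc (b i))"

fun walk_gain :: "(('n \<Rightarrow> nat) \<Rightarrow> real) \<Rightarrow> ('n \<Rightarrow> nat \<Rightarrow> real) \<Rightarrow> ('n \<Rightarrow> nat) \<Rightarrow> 'n list \<Rightarrow> real" where
  "walk_gain Hd \<sigma> b [] = 0"
| "walk_gain Hd \<sigma> b (i # w) = \<sigma> i (Suc (b i)) * (Hd (incr b i) - Hd b) + walk_gain Hd \<sigma> (incr b i) w"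

fun walk_weights :: "('n \<Rightarrow> nat \<Rightarrow> real) \<Rightarrow> ('n \<Rightarrow> nat) \<Rightarrow> 'n list \<Rightarrow> real list" where
  "walk_weights \<sigma> b [] = []"
| "walk_weights \<sigma> b (i # w) = \<sigma> i (Suc (b i)) # walk_weights \<sigma> (incr b i) w"

definition walk_to_top :: "('n \<Rightarrow> nat) \<Rightarrow> ('n \<Rightarrow> nat) \<Rightarrow> 'n list \<Rightarrow> bool" where
  "walk_to_top k b w \<longleftrightarrow> (\<forall>q. b q + count (mset w) q = k q - 1)"

definition walk_point :: "('n \<Rightarrow> nat) \<Rightarrow> 'n list \<Rightarrow> nat \<Rightarrow> ('n \<Rightarrow> nat)" where
  "walk_point b w m = (\<lambda>q. b q + count (mset (take m w)) q)"

definition grid_submodular :: "(('n \<Rightarrow> nat) \<Rightarrow> real) \<Rightarrow> ('n \<Rightarrow> nat) \<Rightarrow> bool" where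
  "grid_submodular Hd k \<longleftrightarrow> (\<forall>x\<in>grid k. \<forall>y\<in>grid k.
     Hd (\<lambda>i. max (x i) (y i)) + Hd (\<lambda>i. min (x i) (y i)) \<le> Hd x + Hd y)"

definition unary :: "('n \<Rightarrow> nat) \<Rightarrow> 'n \<Rightarrow> nat \<Rightarrow> real" where
  "unary x i j = (if j \<le> x i then 1 else 0)"

lemma walk_gain_linear:
  "walk_gain Hd (\<lambda>i j. a * \<sigma> i j + c * \<tau> i j) b w = a * walk_gain Hd \<sigma> b w + c * walk_gain Hd \<tau> b w"
  by (induction w arbitrary: b) (simp_all add: algebra_simps)

lemma length_walk_weights [simp]: "length (walk_weights \<sigma> b w) = length w"
  by (induction w arbitrary: b) simp_all

lemma walk_weight_mem: "q \<in> set w \<Longrightarrow> \<sigma> q (Suc (b q)) \<in> set (walk_weights \<sigma> b w)"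
proof (induction w arbitrary: b)
  case (Cons i w)
  show ?case
  proof (cases "i = q")
    case False
    then have "q \<in> set w" using Cons.prems by simp
    from Cons.IH[OF this, of "incr b i"] False show ?thesis
      by (simp del: fun_upd_apply add: fun_upd_other)
  qed simp
qed simp

lemma walk_point_0 [simp]: "walk_point b w 0 = b"
  by (simp add: walk_point_def)

lemma walk_point_Cons_Suc [simp]: "walk_point b (i # w) (Suc m) = walk_point (incr b i) w m"
  by (auto simp: walk_point_def fun_eq_iff)

lemma nth_walk_weights:
  "m < length w \<Longrightarrow> walk_weights \<sigma> b w ! m = \<sigma> (w!m) (walk_point b w (Suc m) (w!m))"
proof (induction w arbitrary: b m)
  case (Cons i w)
  then show ?case by (cases m) (auto simp: walk_point_def)
qed simp

lemma walk_gain_eq_sum: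
  "walk_gain Hd \<sigma> b w = (\<Sum>m<length w. \<sigma> (w!m) (walk_point b w (Suc m) (w!m)) *
     (Hd (walk_point b w (Suc m)) - Hd (walk_point b w m)))"
proof (induction w arbitrary: b)
  case (Cons i w)
  show ?case
    unfolding walk_gain.simps Cons.IH length_Cons sum.lessThan_Suc_shift by simp
qed simp

lemma walk_to_top_Cons [simp]: "walk_to_top k b (i # w) \<longleftrightarrow> walk_to_top k (incr b i) w"
  by (auto simp: walk_to_top_def)

lemma walk_to_top_Nil [simp]: "walk_to_top k b [] \<longleftrightarrow> b = (\<lambda>q. k q - 1)"
  by (auto simp: walk_to_top_def)

lemma grid_le_top:
  assumes "x \<in> grid k"
  shows "x i \<le> k i - 1"
proof -
  have "x i < k i" using assms by (simp add: grid_def)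
  then show ?thesis by arith
qed

lemma walk_to_top_le:
  assumes "walk_to_top k b w"
  shows "b q + count (mset w) q \<le> k q - 1"
  using assms by (simp add: walk_to_top_def)

lemma walk_to_top_in_grid:
  assumes "walk_to_top k b w" "\<forall>q. 1 \<le> k q"
  shows "b \<in> grid k"
proof -
  have "b q < k q" for q
    using walk_to_top_le[OF assms(1), of q] assms(2)[rule_format, of q] by linarith
  then show ?thesis by (simp add: grid_def)
qed

lemma walk_to_top_next_le:
  assumes "walk_to_top k b w" "q \<in> set w"
  shows "Suc (b q) \<le> k q - 1"
proof -
  have "0 < count (mset w) q" using assms(2) by simp
  then show ?thesis using walk_to_top_le[OF assms(1), of q] by linarith
qed

lemma walk_to_top_incr_in_grid:
  assumes "walk_to_top k b w" "q \<in> set w" "\<forall>q. 1 \<le> k q"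
  shows "incr b q \<in> grid k"
proof -
  have "b \<in> grid k" using walk_to_top_in_grid[OF assms(1,3)] .
  then show ?thesis using walk_to_top_next_le[OF assms(1,2)] by (auto simp: grid_def)
qed

lemma dec_set_antimono:
  assumes "\<sigma> \<in> dec_set k" "1 \<le> j" "j \<le> j'" "j' \<le> k i - 1"
  shows "\<sigma> i j' \<le> \<sigma> i j"
  using assms(3,4)
proof (induction j' rule: dec_induct)
  case (step n)
  then have "\<sigma> i (n + 1) \<le> \<sigma> i n" using assms(1,2) by (auto simp: dec_set_def)
  with step show ?case by simp
qed simp

lemma walk_gain_swap:
  assumes SM: "grid_submodular Hd k" and qi: "q \<noteq> i"
    and grid: "incr b i \<in> grid k" "incr b q \<in> grid k"
    and le: "\<sigma> q (Suc (b q)) \<le> \<sigma> i (Suc (b i))"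
  shows "walk_gain Hd \<sigma> b (q # i # w) \<le> walk_gain Hd \<sigma> b (i # q # w)"
proof -
  define bi bq where "bi = incr b i" and "bq = incr b q"
  define bqi where "bqi = incr bq i"
  have "(\<lambda>x. max (bi x) (bq x)) = bqi" "(\<lambda>x. min (bi x) (bq x)) = b"
    using qi by (auto simp: bi_def bq_def bqi_def fun_eq_iff)
  then have sm: "Hd bqi + Hd b \<le> Hd bi + Hd bq"
    using SM grid unfolding grid_submodular_def bi_def bq_def by metis
  have "0 \<le> (\<sigma> i (Suc (b i)) - \<sigma> q (Suc (b q))) * (Hd bi + Hd bq - Hd b - Hd bqi)"
    using le sm by (intro mult_nonneg_nonneg) auto
  moreover have "walk_gain Hd \<sigma> b (q # i # w) = \<sigma> q (Suc (b q)) * (Hd bq - Hd b)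
      + \<sigma> i (Suc (b i)) * (Hd bqi - Hd bq) + walk_gain Hd \<sigma> bqi w"
    using qi by (simp add: bq_def bqi_def)
  moreover have "walk_gain Hd \<sigma> b (i # q # w) = \<sigma> i (Suc (b i)) * (Hd bi - Hd b)
      + \<sigma> q (Suc (b q)) * (Hd bqi - Hd bi) + walk_gain Hd \<sigma> bqi w"
    using qi by (simp add: bi_def bq_def bqi_def fun_upd_twist)
  ultimately show ?thesis by (simp add: algebra_simps)
qed

lemma walk_gain_bubble:
  assumes SM: "grid_submodular Hd k" and dec: "\<sigma> \<in> dec_set k" and kpos: "\<forall>q. 1 \<le> k q"
  shows "i \<notin> set w1 \<Longrightarrow> \<forall>q\<in>set w1. \<sigma> q (Suc (b q)) \<le> \<sigma> i (Suc (b i)) \<Longrightarrow>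
    walk_to_top k b (w1 @ i # w2) \<Longrightarrow>
    walk_gain Hd \<sigma> b (w1 @ i # w2) \<le> walk_gain Hd \<sigma> b (i # w1 @ w2)"
proof (induction w1 arbitrary: b)
  case (Cons q w1)
  have qi: "q \<noteq> i" using Cons.prems(1) by auto
  have top: "walk_to_top k (incr b q) (w1 @ i # w2)" using Cons.prems(3) by simp
  have le: "\<sigma> q' (Suc (incr b q q')) \<le> \<sigma> i (Suc (incr b q i))" if q': "q' \<in> set w1" for q'
  proof (cases "q' = q")
    case True
    have "q \<in> set (w1 @ i # w2)" using q' True by simp
    then have "Suc (incr b q q) \<le> k q - 1" by (rule walk_to_top_next_le[OF top])
    then have "\<sigma> q (Suc (Suc (b q))) \<le> \<sigma> q (Suc (b q))"
      using dec_set_antimono[OF dec, of "Suc (b q)" "Suc (Suc (b q))" q] by simp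
    then show ?thesis using True qi Cons.prems(2) by simp
  qed (use Cons.prems(2) q' qi in simp)
  have IH: "walk_gain Hd \<sigma> (incr b q) (w1 @ i # w2) \<le> walk_gain Hd \<sigma> (incr b q) (i # w1 @ w2)"
  proof (rule Cons.IH[OF _ _ top])
    show "i \<notin> set w1" using Cons.prems(1) by simp
    show "\<forall>q'\<in>set w1. \<sigma> q' (Suc (incr b q q')) \<le> \<sigma> i (Suc (incr b q i))" using le by blast
  qed
  have "walk_gain Hd \<sigma> b ((q # w1) @ i # w2) \<le> walk_gain Hd \<sigma> b (q # i # w1 @ w2)"
    using IH by simp
  also have "\<dots> \<le> walk_gain Hd \<sigma> b (i # q # w1 @ w2)"
  proof (rule walk_gain_swap[OF SM qi])
    show "incr b i \<in> grid k" "incr b q \<in> grid k"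
      using walk_to_top_incr_in_grid[OF Cons.prems(3) _ kpos] by auto
    show "\<sigma> q (Suc (b q)) \<le> \<sigma> i (Suc (b i))" using Cons.prems(2) by simp
  qed
  finally show ?case by simp
qed simp

lemma walk_gain_le_sorted:
  assumes SM: "grid_submodular Hd k" and dec: "\<sigma> \<in> dec_set k" and kpos: "\<forall>q. 1 \<le> k q"
  shows "mset w = mset ws \<Longrightarrow> sorted_wrt (\<ge>) (walk_weights \<sigma> b ws) \<Longrightarrow> walk_to_top k b ws \<Longrightarrow>
    walk_gain Hd \<sigma> b w \<le> walk_gain Hd \<sigma> b ws"
proof (induction ws arbitrary: b w)
  case (Cons i ws)
  have "i \<in> set w" using Cons.prems(1) by (metis list.set_intros(1) set_mset_mset)
  then obtain w1 w2 where w: "w = w1 @ i # w2" and iw1: "i \<notin> set w1"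
    using split_list_first by metis
  have ms: "mset (w1 @ w2) = mset ws" using Cons.prems(1) w by simp
  have sorted: "sorted_wrt (\<ge>) (walk_weights \<sigma> (incr b i) ws)"
    and first: "\<forall>y\<in>set (walk_weights \<sigma> (incr b i) ws). y \<le> \<sigma> i (Suc (b i))"
    using Cons.prems(2) by simp_all
  have "\<forall>q\<in>set w1. \<sigma> q (Suc (b q)) \<le> \<sigma> i (Suc (b i))"
  proof
    fix q assume q: "q \<in> set w1"
    have "q \<in> set ws" using q ms by (metis mset_eq_setD set_append UnI1)
    then have "\<sigma> q (Suc (incr b i q)) \<in> set (walk_weights \<sigma> (incr b i) ws)" by (rule walk_weight_mem)
    with first q iw1 show "\<sigma> q (Suc (b q)) \<le> \<sigma> i (Suc (b i))" by (cases "q = i") auto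
  qed
  moreover have "walk_to_top k b (w1 @ i # w2)"
    using Cons.prems(1,3) w unfolding walk_to_top_def by simp
  ultimately have "walk_gain Hd \<sigma> b w \<le> walk_gain Hd \<sigma> b (i # w1 @ w2)"
    unfolding w by (rule walk_gain_bubble[OF SM dec kpos iw1])
  also have "\<dots> \<le> walk_gain Hd \<sigma> b (i # ws)"
    unfolding walk_gain.simps
    by (intro add_left_mono Cons.IH[OF ms sorted Cons.prems(3)[unfolded walk_to_top_Cons]])
  finally show ?case .
qed simp

lemma walk_gain_unary_above:
  "\<forall>q. x q \<le> b q \<Longrightarrow> walk_gain Hd (unary x) b w = 0"
proof (induction w arbitrary: b)
  case (Cons i w)
  then have "\<forall>q. x q \<le> incr b i q" by (simp add: le_SucI)
  then have "walk_gain Hd (unary x) (incr b i) w = 0" by (rule Cons.IH)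
  moreover have "unary x i (Suc (b i)) = 0" using Cons.prems by (simp add: unary_def not_less_eq_eq)
  ultimately show ?case by simp
qed simp

lemma threshold_le_walk_base:
  assumes x: "x \<in> grid k"
    and thr: "\<forall>i j. 1 \<le> j \<and> j \<le> k i - 1 \<longrightarrow> (\<theta> \<le> \<sigma> i j \<longleftrightarrow> j \<le> x i)"
    and sorted: "sorted_wrt (\<ge>) (walk_weights \<sigma> b (i # w))" and top: "walk_to_top k b (i # w)"
    and below: "\<sigma> i (Suc (b i)) < \<theta>"
  shows "x q \<le> b q"
proof (cases "q \<in> set (i # w)")
  case True
  have "\<sigma> q (Suc (b q)) \<le> \<sigma> i (Suc (b i))"
    using walk_weight_mem[OF True, of \<sigma> b] sorted by auto
  moreover have "Suc (b q) \<le> k q - 1" by (rule walk_to_top_next_le[OF top True])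
  ultimately show ?thesis using thr below by fastforce
next
  case False
  then have "b q = k q - 1" using top unfolding walk_to_top_def by (metis add_0_right count_mset_0_iff)
  then show ?thesis using grid_le_top[OF x, of q] by simp
qed

text \<open>If the threshold at \<open>\<theta>\<close> of the weights is \<open>x\<close>, a walk sorted by weight first raises
  exactly the coordinates below \<open>x\<close>; afterwards all weights of \<open>unary x\<close> vanish.\<close>

lemma walk_gain_unary:
  assumes x: "x \<in> grid k"
    and thr: "\<forall>i j. 1 \<le> j \<and> j \<le> k i - 1 \<longrightarrow> (\<theta> \<le> \<sigma> i j \<longleftrightarrow> j \<le> x i)"
  shows "sorted_wrt (\<ge>) (walk_weights \<sigma> b w) \<Longrightarrow> walk_to_top k b w \<Longrightarrow>
    walk_gain Hd (unary x) b w = Hd (\<lambda>q. max (b q) (x q)) - Hd b"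
proof (induction w arbitrary: b)
  case Nil
  then have "x q \<le> b q" for q using grid_le_top[OF x] by simp
  then have "(\<lambda>q. max (b q) (x q)) = b" by (simp add: fun_eq_iff)
  then show ?case by simp
next
  case (Cons i w)
  have top: "walk_to_top k (incr b i) w" using Cons.prems(2) by simp
  have sorted: "sorted_wrt (\<ge>) (walk_weights \<sigma> (incr b i) w)"
    using Cons.prems(1) by simp
  show ?case
  proof (cases "Suc (b i) \<le> x i")
    case True
    then have "(\<lambda>q. max (incr b i q) (x q)) = (\<lambda>q. max (b q) (x q))" by (auto simp: fun_eq_iff)
    note IH = Cons.IH[OF sorted top, unfolded this]
    have "unary x i (Suc (b i)) = 1" using True by (simp add: unary_def)
    then show ?thesis by (simp only: walk_gain.simps IH mult_1)
  next
    case False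
    have "Suc (b i) \<le> k i - 1" using walk_to_top_next_le[OF Cons.prems(2)] by simp
    then have "\<sigma> i (Suc (b i)) < \<theta>" using thr[rule_format, of "Suc (b i)" i] False by auto
    then have "x q \<le> b q" for q
      by (rule threshold_le_walk_base[OF x thr Cons.prems])
    then have "\<forall>q. x q \<le> incr b i q" and "(\<lambda>q. max (b q) (x q)) = b"
      by (simp_all add: le_SucI fun_eq_iff)
    moreover have "unary x i (Suc (b i)) = 0" using False by (simp add: unary_def)
    ultimately show ?thesis by (simp add: walk_gain_unary_above)
  qed
qed

lemma finite_index_pairs:
  fixes k :: "'n::finite \<Rightarrow> nat"
  shows "finite {(i, j). 1 \<le> j \<and> j \<le> k i - 1}"
  by (rule finite_subset[of _ "SIGMA i:UNIV. {1..k i - 1}"]) auto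

lemma valid_order_levels:
  assumes "valid_order k \<sigma> L"
  shows "map snd (filter (\<lambda>p. fst p = i) L) = [1..<k i]"
proof -
  let ?F = "filter (\<lambda>p. fst p = i) L"
  have dist: "distinct L" and setL: "set L = {(i, j). 1 \<le> j \<and> j \<le> k i - 1}"
    and ord: "\<And>a b. a < length L \<Longrightarrow> b < length L \<Longrightarrow> fst (L ! a) = fst (L ! b) \<Longrightarrow>
        snd (L ! a) < snd (L ! b) \<Longrightarrow> a < b"
    using assms unfolding valid_order_def by blast+
  have "sorted_wrt (\<lambda>p q. fst p = fst q \<longrightarrow> snd p < snd q) L"
    unfolding sorted_wrt_iff_nth_less
  proof (intro allI impI)
    fix a b assume ab: "a < b" "b < length L" and f: "fst (L!a) = fst (L!b)"
    have "L!a \<noteq> L!b" using dist ab by (simp add: nth_eq_iff_index_eq)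
    then have "snd (L!a) \<noteq> snd (L!b)" using f by (simp add: prod_eq_iff)
    moreover have "\<not> snd (L!b) < snd (L!a)" using ord[of b a] ab f by auto
    ultimately show "snd (L!a) < snd (L!b)" by simp
  qed
  then have "sorted_wrt (\<lambda>p q. snd p < snd q) ?F"
    by (auto intro: sorted_wrt_mono_rel[rotated] sorted_wrt_filter)
  then have "sorted_wrt (<) (map snd ?F)" by (simp add: sorted_wrt_map)
  moreover have "set (map snd ?F) = {1..<k i}"
  proof -
    have "set (map snd ?F) = {j. (i, j) \<in> set L}" by force
    also have "\<dots> = {1..<k i}" using setL by auto
    finally show ?thesis .
  qed
  ultimately show ?thesis
    by (intro sorted_distinct_set_unique) (simp_all add: strict_sorted_iff)
qed

lemma count_mset_map_fst: "count (mset (map fst xs)) i = length (filter (\<lambda>p. fst p = i) xs)"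
  by (induction xs) simp_all

lemma valid_order_walk_to_top:
  assumes "valid_order k \<sigma> L"
  shows "walk_to_top k (\<lambda>_. 0) (map fst L)"
proof -
  have "count (mset (map fst L)) q = k q - 1" for q
  proof -
    have "count (mset (map fst L)) q = length (map snd (filter (\<lambda>p. fst p = q) L))"
      unfolding count_mset_map_fst by simp
    also have "\<dots> = k q - 1" by (simp add: valid_order_levels[OF assms])
    finally show ?thesis .
  qed
  then show ?thesis by (simp add: walk_to_top_def)
qed

lemma chain_pt_eq_walk_point: "chain_pt L m = walk_point (\<lambda>_. 0) (map fst L) m"
  unfolding chain_pt_def walk_point_def take_map count_mset_map_fst by simp

lemma valid_order_snd:
  fixes L :: "('n \<times> nat) list"
  assumes V: "valid_order k \<sigma> L" and m: "m < length L"
  shows "snd (L!m) = chain_pt L (Suc m) (fst (L!m))"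
proof -
  define i where "i = fst (L!m)"
  define P :: "'n \<times> nat \<Rightarrow> bool" where "P = (\<lambda>p. fst p = i)"
  define c where "c = length (filter P (take (Suc m) L))"
  have fc: "filter P (take (Suc m) L) = filter P (take m L) @ [L!m]"
    using m by (simp add: take_Suc_conv_app_nth P_def i_def)
  have "filter P L = filter P (take (Suc m) L) @ filter P (drop (Suc m) L)"
    by (simp flip: filter_append)
  then have "filter P L ! (c - 1) = L!m" "c - 1 < length (filter P L)"
    by (simp_all add: fc c_def nth_append)
  moreover have "map snd (filter P L) = [1..<k i]" unfolding P_def by (rule valid_order_levels[OF V])
  ultimately have "snd (L!m) = [1..<k i] ! (c - 1)" "c - 1 < k i - 1"
    by (metis length_map length_upt nth_map diff_zero)+
  then have "snd (L!m) = c" using fc by (simp add: c_def)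
  then show ?thesis by (simp add: c_def P_def i_def chain_pt_def)
qed

lemma list_le_pair: "([a, b] :: real list) \<le> [c, d] \<Longrightarrow> a \<le> c \<and> (a = c \<longrightarrow> b \<le> d)"
  unfolding list_le_def list_less_def by (simp add: less_le) (elim disjE conjE; simp)

text \<open>A valid order exists: sort the pairs by decreasing weight, breaking ties by level.\<close>

lemma valid_order_exists:
  fixes k :: "'n::finite \<Rightarrow> nat"
  assumes dec: "\<sigma> \<in> dec_set k"
  shows "\<exists>L. valid_order k \<sigma> L"
proof -
  obtain xs where xs: "distinct xs" "set xs = {(i, j). 1 \<le> j \<and> j \<le> k i - 1}"
    using finite_distinct_list[OF finite_index_pairs] by blast
  define key where "key = (\<lambda>p. [- \<sigma> (fst p) (snd p), real (snd p)])"
  define L where "L = sort_key key xs"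
  have dL: "distinct L" and sL: "set L = {(i, j). 1 \<le> j \<and> j \<le> k i - 1}"
    using xs by (simp_all add: L_def)
  have key_le: "- \<sigma> (fst (L!a)) (snd (L!a)) \<le> - \<sigma> (fst (L!b)) (snd (L!b)) \<and>
      (\<sigma> (fst (L!a)) (snd (L!a)) = \<sigma> (fst (L!b)) (snd (L!b)) \<longrightarrow> snd (L!a) \<le> snd (L!b))"
    if "a \<le> b" "b < length L" for a b
  proof -
    have "key (L!a) \<le> key (L!b)"
      using sorted_nth_mono[of "map key L" a b] that by (simp add: L_def)
    then show ?thesis unfolding key_def by (auto dest: list_le_pair)
  qed
  have "snd (L!a) < snd (L!b) \<Longrightarrow> a < b"
    if ab: "a < length L" "b < length L" "fst (L!a) = fst (L!b)" for a b
  proof (rule ccontr)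
    assume lt: "snd (L!a) < snd (L!b)" and "\<not> a < b"
    have "L!a \<in> set L" "L!b \<in> set L" using ab by simp_all
    then have "1 \<le> snd (L!a)" "snd (L!b) \<le> k (fst (L!b)) - 1" using sL by auto
    then have "\<sigma> (fst (L!a)) (snd (L!b)) \<le> \<sigma> (fst (L!a)) (snd (L!a))"
      using dec_set_antimono[OF dec] lt ab(3) by auto
    then show False using key_le[of b a] \<open>\<not> a < b\<close> ab lt by auto
  qed
  then have "valid_order k \<sigma> L"
    unfolding valid_order_def using dL sL key_le by auto
  then show ?thesis by blast
qed

lemma hdown_eq_walk_gain:
  fixes k :: "'n::finite \<Rightarrow> nat"
  assumes "\<sigma> \<in> dec_set k"
  obtains w where "walk_to_top k (\<lambda>_. 0) w" "sorted_wrt (\<ge>) (walk_weights \<sigma> (\<lambda>_. 0) w)"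
    "hdown Hd k \<sigma> = Hd (\<lambda>_. 0) + walk_gain Hd \<sigma> (\<lambda>_. 0) w"
proof
  define L where "L = (SOME L. valid_order k \<sigma> L)"
  have V: "valid_order k \<sigma> L"
    unfolding L_def using valid_order_exists[OF assms] by (rule someI_ex)
  define w where "w = map fst L"
  have weight: "walk_weights \<sigma> (\<lambda>_. 0) w ! m = \<sigma> (fst (L!m)) (snd (L!m))" if "m < length L" for m
    using that nth_walk_weights[of m w] valid_order_snd[OF V that]
    by (simp add: w_def chain_pt_eq_walk_point)
  show "walk_to_top k (\<lambda>_. 0) w" unfolding w_def by (rule valid_order_walk_to_top[OF V])
  show "sorted_wrt (\<ge>) (walk_weights \<sigma> (\<lambda>_. 0) w)"
    unfolding sorted_wrt_iff_nth_less
  proof (intro allI impI)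
    fix a b assume ab: "a < b" "b < length (walk_weights \<sigma> (\<lambda>_. 0) w)"
    then have "b < length L" by (simp add: w_def)
    moreover have "\<sigma> (fst (L!b)) (snd (L!b)) \<le> \<sigma> (fst (L!a)) (snd (L!a))"
      using V ab(1) \<open>b < length L\<close> unfolding valid_order_def by blast
    ultimately show "walk_weights \<sigma> (\<lambda>_. 0) w ! b \<le> walk_weights \<sigma> (\<lambda>_. 0) w ! a"
      using ab(1) by (simp add: weight)
  qed
  have "hdown Hd k \<sigma> = Hd (\<lambda>_. 0) + (\<Sum>m<length L. walk_weights \<sigma> (\<lambda>_. 0) w ! m *
      (Hd (walk_point (\<lambda>_. 0) w (Suc m)) - Hd (walk_point (\<lambda>_. 0) w m)))"
    unfolding hdown_def L_def[symmetric] Let_def chain_pt_eq_walk_point w_def[symmetric]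
    by (simp add: weight)
  also have "\<dots> = Hd (\<lambda>_. 0) + walk_gain Hd \<sigma> (\<lambda>_. 0) w"
    by (simp add: walk_gain_eq_sum nth_walk_weights w_def)
  finally show "hdown Hd k \<sigma> = Hd (\<lambda>_. 0) + walk_gain Hd \<sigma> (\<lambda>_. 0) w" .
qed

lemma walk_gain_le_hdown:
  fixes k :: "'n::finite \<Rightarrow> nat"
  assumes SM: "grid_submodular Hd k" and dec: "\<sigma> \<in> dec_set k" and kpos: "\<forall>q. 1 \<le> k q"
    and w: "walk_to_top k (\<lambda>_. 0) w"
  shows "Hd (\<lambda>_. 0) + walk_gain Hd \<sigma> (\<lambda>_. 0) w \<le> hdown Hd k \<sigma>"
proof -
  obtain ws where ws: "walk_to_top k (\<lambda>_. 0) ws" "sorted_wrt (\<ge>) (walk_weights \<sigma> (\<lambda>_. 0) ws)"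
    and h: "hdown Hd k \<sigma> = Hd (\<lambda>_. 0) + walk_gain Hd \<sigma> (\<lambda>_. 0) ws"
    using hdown_eq_walk_gain[OF dec] by blast
  have "mset w = mset ws"
    using w ws(1) by (simp add: walk_to_top_def multiset_eq_iff)
  then show ?thesis
    using walk_gain_le_sorted[OF SM dec kpos _ ws(2,1)] h by simp
qed

lemma unary_in_dec_set: "unary x \<in> dec_set k"
  by (simp add: dec_set_def unary_def)

lemma hdown_unary:
  fixes k :: "'n::finite \<Rightarrow> nat"
  assumes "x \<in> grid k"
  shows "hdown Hd k (unary x) = Hd x"
proof -
  obtain w where w: "walk_to_top k (\<lambda>_. 0) w" "sorted_wrt (\<ge>) (walk_weights (unary x) (\<lambda>_. 0) w)"
    and h: "hdown Hd k (unary x) = Hd (\<lambda>_. 0) + walk_gain Hd (unary x) (\<lambda>_. 0) w"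
    using hdown_eq_walk_gain[OF unary_in_dec_set] by blast
  have "\<forall>i j. 1 \<le> j \<and> j \<le> k i - 1 \<longrightarrow> (1 \<le> unary x i j \<longleftrightarrow> j \<le> x i)"
    by (simp add: unary_def)
  from walk_gain_unary[OF assms this w(2,1)] show ?thesis using h by simp
qed

lemma fconvex_dec_set: "fconvex (dec_set k)"
  unfolding fconvex_def dec_set_def comb_def
  by (auto intro!: add_mono mult_left_mono)

lemma fconvex_on_hdown:
  fixes k :: "'n::finite \<Rightarrow> nat"
  assumes SM: "grid_submodular Hd k" and kpos: "\<forall>q. 1 \<le> k q"
  shows "fconvex_on (dec_set k) (hdown Hd k)"
  unfolding fconvex_on_def
proof (intro ballI allI impI)
  fix \<rho> \<sigma> and t :: real
  assume \<rho>: "\<rho> \<in> dec_set k" and \<sigma>: "\<sigma> \<in> dec_set k" and t: "0 \<le> t \<and> t \<le> 1"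
  have "comb t \<rho> \<sigma> \<in> dec_set k" using fconvex_dec_set \<rho> \<sigma> t unfolding fconvex_def by blast
  then obtain w where w: "walk_to_top k (\<lambda>_. 0) w"
    and h: "hdown Hd k (comb t \<rho> \<sigma>) = Hd (\<lambda>_. 0) + walk_gain Hd (comb t \<rho> \<sigma>) (\<lambda>_. 0) w"
    using hdown_eq_walk_gain by blast
  have "hdown Hd k (comb t \<rho> \<sigma>) =
      t * (Hd (\<lambda>_. 0) + walk_gain Hd \<rho> (\<lambda>_. 0) w) + (1 - t) * (Hd (\<lambda>_. 0) + walk_gain Hd \<sigma> (\<lambda>_. 0) w)"
    unfolding h unfolding comb_def walk_gain_linear by (simp add: algebra_simps)
  also have "\<dots> \<le> t * hdown Hd k \<rho> + (1 - t) * hdown Hd k \<sigma>"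
    using walk_gain_le_hdown[OF SM _ kpos w] \<rho> \<sigma> t by (intro add_mono mult_left_mono) auto
  finally show "hdown Hd k (comb t \<rho> \<sigma>) \<le> t * hdown Hd k \<rho> + (1 - t) * hdown Hd k \<sigma>" .
qed

lemma fconvex_on_add:
  assumes "fconvex_on D f" "fconvex_on D g"
  shows "fconvex_on D (\<lambda>\<rho>. f \<rho> + g \<rho>)"
  unfolding fconvex_on_def
proof (intro ballI allI impI)
  fix \<rho> \<sigma> and t :: real assume "\<rho> \<in> D" "\<sigma> \<in> D" "0 \<le> t \<and> t \<le> 1"
  then have "f (comb t \<rho> \<sigma>) \<le> t * f \<rho> + (1 - t) * f \<sigma>" "g (comb t \<rho> \<sigma>) \<le> t * g \<rho> + (1 - t) * g \<sigma>"
    using assms unfolding fconvex_on_def by blast+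
  then show "f (comb t \<rho> \<sigma>) + g (comb t \<rho> \<sigma>) \<le> t * (f \<rho> + g \<rho>) + (1 - t) * (f \<sigma> + g \<sigma>)"
    by (simp add: algebra_simps)
qed

lemma fconvex_on_weighted_squares:
  fixes c :: "'n \<Rightarrow> nat \<Rightarrow> real"
  assumes c: "\<forall>i j. 1 \<le> j \<and> j \<le> k i - 1 \<longrightarrow> 0 \<le> c i j"
  shows "fconvex_on D (\<lambda>\<rho>. \<Sum>i\<in>UNIV. \<Sum>j\<in>{1..k i - 1}. (1/2) * (\<rho> i j)^2 * c i j)"
  unfolding fconvex_on_def
proof (intro ballI allI impI)
  fix \<rho> \<sigma> and t :: real assume t: "0 \<le> t \<and> t \<le> 1"
  have termwise: "(1/2) * (comb t \<rho> \<sigma> i j)^2 * c i j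
      \<le> t * ((1/2) * (\<rho> i j)^2 * c i j) + (1 - t) * ((1/2) * (\<sigma> i j)^2 * c i j)"
    if "j \<in> {1..k i - 1}" for i j
  proof -
    have "t * (\<rho> i j)^2 + (1 - t) * (\<sigma> i j)^2 - (comb t \<rho> \<sigma> i j)^2 = t * (1 - t) * (\<rho> i j - \<sigma> i j)^2"
      by (simp add: comb_def power2_eq_square algebra_simps)
    also have "\<dots> \<ge> 0" using t by simp
    finally have "(comb t \<rho> \<sigma> i j)^2 \<le> t * (\<rho> i j)^2 + (1 - t) * (\<sigma> i j)^2" by simp
    moreover have "0 \<le> c i j" using c that by simp
    ultimately have "(1/2) * (comb t \<rho> \<sigma> i j)^2 * c i j
        \<le> (1/2) * ((t * (\<rho> i j)^2 + (1 - t) * (\<sigma> i j)^2) * c i j)"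
      by (simp add: mult_right_mono)
    also have "\<dots> = t * ((1/2) * (\<rho> i j)^2 * c i j) + (1 - t) * ((1/2) * (\<sigma> i j)^2 * c i j)"
      by (simp add: field_simps)
    finally show ?thesis .
  qed
  have "(\<Sum>i\<in>UNIV. \<Sum>j\<in>{1..k i - 1}. (1/2) * (comb t \<rho> \<sigma> i j)^2 * c i j)
      \<le> (\<Sum>i\<in>UNIV. \<Sum>j\<in>{1..k i - 1}.
           t * ((1/2) * (\<rho> i j)^2 * c i j) + (1 - t) * ((1/2) * (\<sigma> i j)^2 * c i j))"
    by (intro sum_mono termwise)
  also have "\<dots> = t * (\<Sum>i\<in>UNIV. \<Sum>j\<in>{1..k i - 1}. (1/2) * (\<rho> i j)^2 * c i j)
      + (1 - t) * (\<Sum>i\<in>UNIV. \<Sum>j\<in>{1..k i - 1}. (1/2) * (\<sigma> i j)^2 * c i j)"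
    by (simp add: sum.distrib sum_distrib_left)
  finally show "(\<Sum>i\<in>UNIV. \<Sum>j\<in>{1..k i - 1}. (1/2) * (comb t \<rho> \<sigma> i j)^2 * c i j)
      \<le> t * (\<Sum>i\<in>UNIV. \<Sum>j\<in>{1..k i - 1}. (1/2) * (\<rho> i j)^2 * c i j)
      + (1 - t) * (\<Sum>i\<in>UNIV. \<Sum>j\<in>{1..k i - 1}. (1/2) * (\<sigma> i j)^2 * c i j)" .
qed

definition level_point :: "('n \<Rightarrow> nat) \<Rightarrow> ('n \<Rightarrow> nat \<Rightarrow> real) \<Rightarrow> real \<Rightarrow> 'n \<Rightarrow> nat" where
  "level_point k \<sigma> lam = (\<lambda>i. if \<exists>j. 1 \<le> j \<and> j \<le> k i - 1 \<and> \<sigma> i j \<ge> lam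
     then Max {j. 1 \<le> j \<and> j \<le> k i - 1 \<and> \<sigma> i j \<ge> lam} else 0)"

lemma level_point_le: "level_point k \<sigma> lam i \<le> k i - 1"
proof -
  let ?S = "{j. 1 \<le> j \<and> j \<le> k i - 1 \<and> \<sigma> i j \<ge> lam}"
  have "finite ?S" by (rule finite_subset[of _ "{..k i - 1}"]) auto
  then have "?S \<noteq> {} \<Longrightarrow> Max ?S \<in> ?S" by (rule Max_in)
  then have "?S \<noteq> {} \<Longrightarrow> Max ?S \<le> k i - 1" by blast
  moreover have "(\<exists>j. 1 \<le> j \<and> j \<le> k i - 1 \<and> \<sigma> i j \<ge> lam) \<longleftrightarrow> ?S \<noteq> {}" by auto
  ultimately show ?thesis by (simp add: level_point_def)
qed

lemma level_point_in_grid: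
  assumes "\<forall>i. 1 \<le> k i"
  shows "level_point k \<sigma> lam \<in> grid k"
proof -
  have "level_point k \<sigma> lam i < k i" for i
    using level_point_le[of k \<sigma> lam i] assms[rule_format, of i] by arith
  then show ?thesis by (simp add: grid_def)
qed

lemma level_point_iff:
  assumes dec: "\<sigma> \<in> dec_set k" and j: "1 \<le> j" "j \<le> k i - 1"
  shows "lam \<le> \<sigma> i j \<longleftrightarrow> j \<le> level_point k \<sigma> lam i"
proof -
  let ?S = "{j. 1 \<le> j \<and> j \<le> k i - 1 \<and> \<sigma> i j \<ge> lam}"
  have fin: "finite ?S" by (rule finite_subset[of _ "{..k i - 1}"]) auto
  show ?thesis
  proof
    assume "lam \<le> \<sigma> i j"
    then have "j \<in> ?S" using j by simp
    with fin show "j \<le> level_point k \<sigma> lam i" by (auto simp: level_point_def)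
  next
    assume jx: "j \<le> level_point k \<sigma> lam i"
    then have "?S \<noteq> {}" using j by (auto simp: level_point_def split: if_splits)
    then have "Max ?S \<in> ?S" "level_point k \<sigma> lam i = Max ?S"
      using fin Max_in by (auto simp only: level_point_def if_P ex_in_conv[symmetric] mem_Collect_eq)
    then have "lam \<le> \<sigma> i (Max ?S)" "j \<le> Max ?S" "Max ?S \<le> k i - 1" using jx by auto
    then show "lam \<le> \<sigma> i j" using dec_set_antimono[OF dec j(1), of "Max ?S" i] by linarith
  qed
qed

lemma level_gap:
  fixes k :: "'n::finite \<Rightarrow> nat" and \<sigma> :: "'n \<Rightarrow> nat \<Rightarrow> real"
  obtains e where "0 < e" "\<forall>i j. 1 \<le> j \<and> j \<le> k i - 1 \<and> \<sigma> i j < lam \<longrightarrow> \<sigma> i j + e \<le> lam"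
proof
  define P where "P = {(i, j). 1 \<le> j \<and> j \<le> k i - 1 \<and> \<sigma> i j < lam}"
  define S where "S = insert (lam - 1) ((\<lambda>(i, j). \<sigma> i j) ` P)"
  have "finite P" by (rule finite_subset[OF _ finite_index_pairs]) (auto simp: P_def)
  then have fin: "finite S" by (simp add: S_def)
  have "Max S \<in> S" using fin by (intro Max_in) (auto simp: S_def)
  then show "0 < lam - Max S" by (auto simp: S_def P_def)
  show "\<forall>i j. 1 \<le> j \<and> j \<le> k i - 1 \<and> \<sigma> i j < lam \<longrightarrow> \<sigma> i j + (lam - Max S) \<le> lam"
  proof (intro allI impI)
    fix i j assume "1 \<le> j \<and> j \<le> k i - 1 \<and> \<sigma> i j < lam"
    then have "\<sigma> i j \<in> S" unfolding S_def P_def by (intro insertI2 image_eqI[of _ _ "(i, j)"]) auto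
    then show "\<sigma> i j + (lam - Max S) \<le> lam" using Max_ge[OF fin] by fastforce
  qed
qed

lemma level_perturbation:
  assumes dec: "\<sigma> \<in> dec_set k"
    and gap: "\<forall>i j. 1 \<le> j \<and> j \<le> k i - 1 \<and> \<sigma> i j < lam \<longrightarrow> \<sigma> i j + e \<le> lam"
    and \<epsilon>: "0 < \<epsilon>" "2 * \<epsilon> < e"
    and x: "x = level_point k \<sigma> lam"
  shows "(\<lambda>i j. \<sigma> i j + \<epsilon> * (unary y i j - unary x i j)) \<in> dec_set k"
    and "\<forall>i j. 1 \<le> j \<and> j \<le> k i - 1 \<longrightarrow>
      (lam - \<epsilon> \<le> \<sigma> i j + \<epsilon> * (unary y i j - unary x i j) \<longleftrightarrow> j \<le> x i)"
proof -
  have thr: "lam \<le> \<sigma> i j \<longleftrightarrow> j \<le> x i" if "1 \<le> j" "j \<le> k i - 1" for i j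
    using level_point_iff[OF dec that] x by simp
  show "(\<lambda>i j. \<sigma> i j + \<epsilon> * (unary y i j - unary x i j)) \<in> dec_set k"
    unfolding dec_set_def mem_Collect_eq
  proof (intro allI impI)
    fix i j assume j: "1 \<le> j \<and> j + 1 \<le> k i - 1"
    have "\<sigma> i (j + 1) \<le> \<sigma> i j" using dec j unfolding dec_set_def by blast
    moreover have "lam \<le> \<sigma> i j \<longleftrightarrow> j \<le> x i" "lam \<le> \<sigma> i (j + 1) \<longleftrightarrow> j + 1 \<le> x i"
      using thr j by auto
    moreover have "\<sigma> i (j + 1) < lam \<Longrightarrow> \<sigma> i (j + 1) + e \<le> lam" using gap j by auto
    ultimately show "\<sigma> i (j + 1) + \<epsilon> * (unary y i (j + 1) - unary x i (j + 1))
        \<le> \<sigma> i j + \<epsilon> * (unary y i j - unary x i j)"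
      unfolding unary_def using \<epsilon>
      by (cases "j \<le> x i"; cases "j + 1 \<le> x i"; cases "j \<le> y i"; cases "j + 1 \<le> y i"; simp; linarith)
  qed
  show "\<forall>i j. 1 \<le> j \<and> j \<le> k i - 1 \<longrightarrow>
      (lam - \<epsilon> \<le> \<sigma> i j + \<epsilon> * (unary y i j - unary x i j) \<longleftrightarrow> j \<le> x i)"
  proof (intro allI impI)
    fix i j assume j: "1 \<le> j \<and> j \<le> k i - 1"
    then have "lam \<le> \<sigma> i j \<longleftrightarrow> j \<le> x i" "\<sigma> i j < lam \<Longrightarrow> \<sigma> i j + e \<le> lam"
      using thr gap by auto
    then show "lam - \<epsilon> \<le> \<sigma> i j + \<epsilon> * (unary y i j - unary x i j) \<longleftrightarrow> j \<le> x i"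
      unfolding unary_def using \<epsilon> by (cases "j \<le> x i"; cases "j \<le> y i"; simp; linarith)
  qed
qed

lemma hdown_perturbation_le:
  fixes k :: "'n::finite \<Rightarrow> nat"
  assumes SM: "grid_submodular Hd k" and kpos: "\<forall>q. 1 \<le> k q"
    and dec: "\<sigma> \<in> dec_set k" and x: "x \<in> grid k" and y: "y \<in> grid k" and \<epsilon>: "0 \<le> \<epsilon>"
    and dec': "(\<lambda>i j. \<sigma> i j + \<epsilon> * (unary y i j - unary x i j)) \<in> dec_set k"
    and thr: "\<forall>i j. 1 \<le> j \<and> j \<le> k i - 1 \<longrightarrow>
      (\<theta> \<le> \<sigma> i j + \<epsilon> * (unary y i j - unary x i j) \<longleftrightarrow> j \<le> x i)"
  shows "hdown Hd k (\<lambda>i j. \<sigma> i j + \<epsilon> * (unary y i j - unary x i j)) \<le> hdown Hd k \<sigma> + \<epsilon> * (Hd y - Hd x)"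
proof -
  obtain w where w: "walk_to_top k (\<lambda>_. 0) w"
    and sorted: "sorted_wrt (\<ge>) (walk_weights (\<lambda>i j. \<sigma> i j + \<epsilon> * (unary y i j - unary x i j)) (\<lambda>_. 0) w)"
    and h: "hdown Hd k (\<lambda>i j. \<sigma> i j + \<epsilon> * (unary y i j - unary x i j))
      = Hd (\<lambda>_. 0) + walk_gain Hd (\<lambda>i j. \<sigma> i j + \<epsilon> * (unary y i j - unary x i j)) (\<lambda>_. 0) w"
    using hdown_eq_walk_gain[OF dec'] by blast
  have "walk_gain Hd (\<lambda>i j. \<sigma> i j + \<epsilon> * (unary y i j - unary x i j)) (\<lambda>_. 0) w
      = walk_gain Hd \<sigma> (\<lambda>_. 0) w + \<epsilon> * walk_gain Hd (unary y) (\<lambda>_. 0) w - \<epsilon> * walk_gain Hd (unary x) (\<lambda>_. 0) w"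
  proof -
    have "walk_gain Hd (\<lambda>i j. unary y i j - unary x i j) (\<lambda>_. 0) w
        = walk_gain Hd (unary y) (\<lambda>_. 0) w - walk_gain Hd (unary x) (\<lambda>_. 0) w"
      using walk_gain_linear[of Hd 1 "unary y" "-1" "unary x" "\<lambda>_. 0" w] by simp
    from walk_gain_linear[of Hd 1 \<sigma> \<epsilon> "\<lambda>i j. unary y i j - unary x i j" "\<lambda>_. 0" w, unfolded this]
    show ?thesis by (simp add: algebra_simps)
  qed
  moreover have "Hd (\<lambda>_. 0) + walk_gain Hd \<sigma> (\<lambda>_. 0) w \<le> hdown Hd k \<sigma>"
    by (rule walk_gain_le_hdown[OF SM dec kpos w])
  moreover have "Hd (\<lambda>_. 0) + walk_gain Hd (unary y) (\<lambda>_. 0) w \<le> Hd y"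
    using walk_gain_le_hdown[OF SM unary_in_dec_set kpos w, of y] hdown_unary[OF y, of Hd] by simp
  moreover have "walk_gain Hd (unary x) (\<lambda>_. 0) w = Hd x - Hd (\<lambda>_. 0)"
    using walk_gain_unary[OF x thr sorted w] by simp
  ultimately show ?thesis
    using h mult_left_mono[OF _ \<epsilon>, of "walk_gain Hd (unary y) (\<lambda>_. 0) w" "Hd y - Hd (\<lambda>_. 0)"]
    by (simp add: algebra_simps)
qed

lemma weighted_squares_perturbation_le:
  fixes \<sigma> d c :: "'n \<Rightarrow> nat \<Rightarrow> real"
  assumes c: "\<forall>i j. 1 \<le> j \<and> j \<le> k i - 1 \<longrightarrow> 0 \<le> c i j" and \<epsilon>: "0 \<le> \<epsilon>"
    and sign: "\<forall>i j. 1 \<le> j \<and> j \<le> k i - 1 \<longrightarrow> d i j * (\<sigma> i j - lam) \<le> 0"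
  shows "(\<Sum>i\<in>UNIV. \<Sum>j\<in>{1..k i - 1}. (1/2) * (\<sigma> i j + \<epsilon> * d i j)^2 * c i j)
    \<le> (\<Sum>i\<in>UNIV. \<Sum>j\<in>{1..k i - 1}. (1/2) * (\<sigma> i j)^2 * c i j)
      + \<epsilon> * lam * (\<Sum>i\<in>UNIV. \<Sum>j\<in>{1..k i - 1}. d i j * c i j)
      + \<epsilon>^2 / 2 * (\<Sum>i\<in>UNIV. \<Sum>j\<in>{1..k i - 1}. (d i j)^2 * c i j)"
proof -
  have "(1/2) * (\<sigma> i j + \<epsilon> * d i j)^2 * c i j
      \<le> (1/2) * (\<sigma> i j)^2 * c i j + \<epsilon> * lam * (d i j * c i j) + \<epsilon>^2 / 2 * ((d i j)^2 * c i j)"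
    if "j \<in> {1..k i - 1}" for i j
  proof -
    have "0 \<le> \<epsilon> * c i j" using c \<epsilon> that by simp
    then have "(\<epsilon> * c i j) * (d i j * (\<sigma> i j - lam)) \<le> 0"
      using sign that by (simp add: mult_nonneg_nonpos)
    then show ?thesis by (simp add: power2_eq_square algebra_simps)
  qed
  then have "(\<Sum>i\<in>UNIV. \<Sum>j\<in>{1..k i - 1}. (1/2) * (\<sigma> i j + \<epsilon> * d i j)^2 * c i j)
    \<le> (\<Sum>i\<in>UNIV. \<Sum>j\<in>{1..k i - 1}.
       (1/2) * (\<sigma> i j)^2 * c i j + \<epsilon> * lam * (d i j * c i j) + \<epsilon>^2 / 2 * ((d i j)^2 * c i j))"
    by (intro sum_mono)
  then show ?thesis by (simp add: sum.distrib sum_distrib_left)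
qed

lemma sum_unary_increments:
  assumes "x i \<le> n"
  shows "(\<Sum>j\<in>{1..n}. unary x i j * (g j - g (j - 1))) = g (x i) - g 0"
proof -
  have telescope: "(\<Sum>j\<in>{1..m}. g j - g (j - 1)) = g m - g 0" for m
    by (induction m) (simp_all add: sum.cl_ivl_Suc)
  have "(\<Sum>j\<in>{1..n}. unary x i j * (g j - g (j - 1))) = (\<Sum>j\<in>{1..x i}. g j - g (j - 1))"
    using assms by (intro sum.mono_neutral_cong_right) (auto simp: unary_def)
  also have "\<dots> = g (x i) - g 0" by (rule telescope)
  finally show ?thesis .
qed

lemma sum_unary_grid_increments:
  assumes "x \<in> grid k"
  shows "(\<Sum>i\<in>UNIV. \<Sum>j\<in>{1..k i - 1}. unary x i j * (g i j - g i (j - 1)))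
    = (\<Sum>i\<in>UNIV. g i (x i) - g i 0)"
  using assms by (intro sum.cong sum_unary_increments grid_le_top) simp_all

lemma level_point_direction_sign:
  assumes "\<sigma> \<in> dec_set k" "1 \<le> j" "j \<le> k i - 1"
  shows "(unary y i j - unary (level_point k \<sigma> lam) i j) * (\<sigma> i j - lam) \<le> 0"
  using level_point_iff[OF assms, of lam] by (auto simp: unary_def mult_le_0_iff)

lemma nonneg_if_nonneg_perturbations:
  fixes a M d :: real
  assumes "0 < d" "\<forall>\<epsilon>. 0 < \<epsilon> \<and> \<epsilon> < d \<longrightarrow> 0 \<le> a + \<epsilon> * M"
  shows "0 \<le> a"
proof (rule tendsto_lowerbound)
  show "((\<lambda>\<epsilon>. a + \<epsilon> * M) \<longlongrightarrow> a) (at_right 0)"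
    by (auto intro!: tendsto_eq_intros)
  show "\<forall>\<^sub>F \<epsilon> in at_right 0. 0 \<le> a + \<epsilon> * M"
    using eventually_at_right_real[OF assms(1)] by eventually_elim (use assms(2) in auto)
qed simp

lemma level_point_minimizes:
  fixes k :: "'n::finite \<Rightarrow> nat" and g :: "'n \<Rightarrow> nat \<Rightarrow> real"
  defines "Q \<equiv> \<lambda>\<rho>. \<Sum>i\<in>UNIV. \<Sum>j\<in>{1..k i - 1}. (1/2) * (\<rho> i j)^2 * (g i j - g i (j - 1))"
  assumes SM: "grid_submodular Hd k" and kpos: "\<forall>i. 1 \<le> k i"
    and c: "\<forall>i j. 1 \<le> j \<and> j \<le> k i - 1 \<longrightarrow> 0 \<le> g i j - g i (j - 1)"
    and dec: "\<sigma> \<in> dec_set k"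
    and min: "\<forall>\<rho>\<in>dec_set k. hdown Hd k \<sigma> + Q \<sigma> \<le> hdown Hd k \<rho> + Q \<rho>"
    and y: "y \<in> grid k"
  shows "Hd (level_point k \<sigma> lam) + lam * (\<Sum>i\<in>UNIV. g i (level_point k \<sigma> lam i))
    \<le> Hd y + lam * (\<Sum>i\<in>UNIV. g i (y i))"
proof -
  define x where "x = level_point k \<sigma> lam"
  define d where "d = (\<lambda>i j. unary y i j - unary x i j)"
  define a where "a = Hd y - Hd x + lam * ((\<Sum>i\<in>UNIV. g i (y i)) - (\<Sum>i\<in>UNIV. g i (x i)))"
  define K where "K = (\<Sum>i\<in>UNIV. \<Sum>j\<in>{1..k i - 1}. (d i j)^2 * (g i j - g i (j - 1)))"
  have x: "x \<in> grid k" unfolding x_def by (rule level_point_in_grid[OF kpos])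
  obtain e where e: "0 < e" and gap: "\<forall>i j. 1 \<le> j \<and> j \<le> k i - 1 \<and> \<sigma> i j < lam \<longrightarrow> \<sigma> i j + e \<le> lam"
    using level_gap by blast
  have sign: "\<forall>i j. 1 \<le> j \<and> j \<le> k i - 1 \<longrightarrow> d i j * (\<sigma> i j - lam) \<le> 0"
    using level_point_direction_sign[OF dec] by (simp add: d_def x_def)
  have increments: "(\<Sum>i\<in>UNIV. \<Sum>j\<in>{1..k i - 1}. d i j * (g i j - g i (j - 1)))
      = (\<Sum>i\<in>UNIV. g i (y i)) - (\<Sum>i\<in>UNIV. g i (x i))"
    unfolding d_def left_diff_distrib sum_subtractf sum_unary_grid_increments[OF y]
      sum_unary_grid_increments[OF x] by simp
  have "0 \<le> a + \<epsilon> * (K / 2)" if \<epsilon>: "0 < \<epsilon>" "\<epsilon> < e / 2" for \<epsilon>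
  proof -
    have \<epsilon>': "0 < \<epsilon>" "2 * \<epsilon> < e" using \<epsilon> by simp_all
    note perturbed = level_perturbation[OF dec gap \<epsilon>' x_def, of y]
    have "hdown Hd k \<sigma> + Q \<sigma> \<le> hdown Hd k (\<lambda>i j. \<sigma> i j + \<epsilon> * d i j) + Q (\<lambda>i j. \<sigma> i j + \<epsilon> * d i j)"
      using min perturbed(1) by (simp add: d_def)
    also have "\<dots> \<le> (hdown Hd k \<sigma> + \<epsilon> * (Hd y - Hd x)) + (Q \<sigma> + \<epsilon> * lam *
        ((\<Sum>i\<in>UNIV. g i (y i)) - (\<Sum>i\<in>UNIV. g i (x i))) + \<epsilon>^2 / 2 * K)"
    proof (rule add_mono)
      show "hdown Hd k (\<lambda>i j. \<sigma> i j + \<epsilon> * d i j) \<le> hdown Hd k \<sigma> + \<epsilon> * (Hd y - Hd x)"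
        unfolding d_def using \<epsilon> perturbed
        by (intro hdown_perturbation_le[OF SM kpos dec x y]) auto
      show "Q (\<lambda>i j. \<sigma> i j + \<epsilon> * d i j) \<le> Q \<sigma> + \<epsilon> * lam *
          ((\<Sum>i\<in>UNIV. g i (y i)) - (\<Sum>i\<in>UNIV. g i (x i))) + \<epsilon>^2 / 2 * K"
        using weighted_squares_perturbation_le[OF c _ sign, of \<epsilon>] \<epsilon>
        unfolding Q_def K_def increments by simp
    qed
    finally have "0 \<le> \<epsilon> * (a + \<epsilon> * (K / 2))"
      by (simp add: a_def power2_eq_square algebra_simps)
    then show ?thesis using \<epsilon> by (simp add: zero_le_mult_iff)
  qed
  then have "0 \<le> a"
    by (intro nonneg_if_nonneg_perturbations[of "e / 2" a "K / 2"]) (use e in auto)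
  then show ?thesis by (simp add: a_def x_def algebra_simps)
qed

lemma mono_on_max:
  fixes f :: "'a::linorder \<Rightarrow> 'b::linorder"
  assumes "mono_on S f" "a \<in> S" "b \<in> S"
  shows "f (max a b) = max (f a) (f b)"
proof (cases "a \<le> b")
  case True
  then show ?thesis using mono_onD[OF assms True] by (simp add: max_def)
next
  case False
  then have "f b \<le> f a" using mono_onD[OF assms(1,3,2)] by simp
  then show ?thesis using False by (auto simp: max_def)
qed

lemma mono_on_min:
  fixes f :: "'a::linorder \<Rightarrow> 'b::linorder"
  assumes "mono_on S f" "a \<in> S" "b \<in> S"
  shows "f (min a b) = min (f a) (f b)"
proof (cases "a \<le> b")
  case True
  then show ?thesis using mono_onD[OF assms True] by (simp add: min_def)
next
  case False
  then have "f b \<le> f a" using mono_onD[OF assms(1,3,2)] by simp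
  then show ?thesis using False by (auto simp: min_def)
qed

lemma interpolation_in_interval:
  fixes A :: "nat \<Rightarrow> real"
  assumes "mono_on {..<n} A" "A 0 = a" "A (n - 1) = b" "j < n"
  shows "A j \<in> {a..b}"
  using mono_onD[OF assms(1), of 0 j] mono_onD[OF assms(1), of j "n - 1"] assms(2-4) by auto

lemma increment_comp_interpolation_nonneg:
  fixes A :: "nat \<Rightarrow> real" and R :: "real \<Rightarrow> real"
  assumes A: "mono_on {..<n} A" "A 0 = a" "A (n - 1) = b" and R: "mono_on {a..b} R"
    and j: "1 \<le> j" "j \<le> n - 1"
  shows "0 \<le> R (A j) - R (A (j - 1))"
proof -
  have "A (j - 1) \<le> A j" "A (j - 1) \<in> {a..b}" "A j \<in> {a..b}"
    using j mono_onD[OF A(1), of "j - 1" j] interpolation_in_interval[OF A] by auto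
  then show ?thesis using mono_onD[OF R] by simp
qed

lemma grid_submodular_comp:
  fixes H :: "real ^ 'n \<Rightarrow> real" and A :: "'n \<Rightarrow> nat \<Rightarrow> real"
  assumes Hsub: "submodular_on (cbox l u) H"
    and Amono: "\<forall>i. mono_on {..< k i} (A i)"
    and Arange: "\<forall>i j. j < k i \<longrightarrow> A i j \<in> {l $ i .. u $ i}"
  shows "grid_submodular (\<lambda>x. H (\<chi> i. A i (x i))) k"
  unfolding grid_submodular_def
proof (intro ballI)
  fix x y assume x: "x \<in> grid k" and y: "y \<in> grid k"
  have "(\<chi> i. A i (x i)) \<in> cbox l u" "(\<chi> i. A i (y i)) \<in> cbox l u"
    using x y Arange by (auto simp: grid_def mem_box_cart)
  moreover have "A i (max (x i) (y i)) = max (A i (x i)) (A i (y i))"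
    "A i (min (x i) (y i)) = min (A i (x i)) (A i (y i))" for i
    using x y Amono[rule_format, of i]
    by (simp_all add: grid_def mono_on_max[of "{..<k i}"] mono_on_min[of "{..<k i}"])
  then have "sup (\<chi> i. A i (x i)) (\<chi> i. A i (y i)) = (\<chi> i. A i (max (x i) (y i)))"
    "inf (\<chi> i. A i (x i)) (\<chi> i. A i (y i)) = (\<chi> i. A i (min (x i) (y i)))"
    by (simp_all add: sup_vec_def inf_vec_def sup_max inf_min)
  ultimately show "H (\<chi> i. A i (max (x i) (y i))) + H (\<chi> i. A i (min (x i) (y i)))
      \<le> H (\<chi> i. A i (x i)) + H (\<chi> i. A i (y i))"
    using Hsub unfolding submodular_on_def by metis
qed

theorem lemma2:
  fixes l u :: "real ^ 'n"
    and H :: "real ^ 'n \<Rightarrow> real"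
    and R :: "'n \<Rightarrow> real \<Rightarrow> real"
    and k :: "'n \<Rightarrow> nat"
    and A :: "'n \<Rightarrow> nat \<Rightarrow> real"
    and \<rho>s :: "'n \<Rightarrow> nat \<Rightarrow> real"
  defines "Hd \<equiv> (\<lambda>x. H (\<chi> i. A i (x i)))"
    and "Rdsum \<equiv> (\<lambda>x. \<Sum>i\<in>UNIV. R i (A i (x i)))"
    and "F \<equiv> (\<lambda>\<rho>. hdown (\<lambda>x. H (\<chi> i. A i (x i))) k \<rho> +
              (\<Sum>i\<in>UNIV. \<Sum>j\<in>{1..k i - 1}. (1/2) * (\<rho> i j)^2 * (R i (A i j) - R i (A i (j - 1)))))"
  assumes lu: "l \<le> u"
    and Hcont: "continuous_on (cbox l u) H"
    and Hsub: "submodular_on (cbox l u) H"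
    and Rmono: "\<forall>i. strict_mono_on {l $ i .. u $ i} (R i)"
    and kpos: "\<forall>i. 1 \<le> k i"
    and Amono: "\<forall>i. mono_on {..< k i} (A i)"
    and A0: "\<forall>i. A i 0 = l $ i"
    and Atop: "\<forall>i. A i (k i - 1) = u $ i"
    and \<rho>s_mem: "\<rho>s \<in> dec_set k"
    and \<rho>s_min: "\<forall>\<rho>\<in>dec_set k. F \<rho>s \<le> F \<rho>"
  shows "fconvex (dec_set k) \<and> fconvex_on (dec_set k) F \<and>
    (\<forall>lam::real.
       (let xlam = (\<lambda>i. if \<exists>j. 1 \<le> j \<and> j \<le> k i - 1 \<and> \<rho>s i j \<ge> lam
                      then Max {j. 1 \<le> j \<and> j \<le> k i - 1 \<and> \<rho>s i j \<ge> lam} else 0)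
        in xlam \<in> grid k \<and>
           (\<forall>x\<in>grid k. Hd xlam + lam * Rdsum xlam \<le> Hd x + lam * Rdsum x)))"
proof -
  have "A i j \<in> {l $ i .. u $ i}" if "j < k i" for i j
    using interpolation_in_interval[OF Amono[rule_format] A0[rule_format] Atop[rule_format] that] .
  then have SM: "grid_submodular Hd k"
    unfolding Hd_def by (intro grid_submodular_comp[OF Hsub Amono] allI impI)
  have ginc: "\<forall>i j. 1 \<le> j \<and> j \<le> k i - 1 \<longrightarrow> 0 \<le> R i (A i j) - R i (A i (j - 1))"
  proof (intro allI impI)
    fix i j assume "1 \<le> j \<and> j \<le> k i - 1"
    then show "0 \<le> R i (A i j) - R i (A i (j - 1))"
      using increment_comp_interpolation_nonneg[OF Amono[rule_format, of i] A0[rule_format, of i]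
        Atop[rule_format, of i] strict_mono_on_imp_mono_on[OF Rmono[rule_format, of i]]] by blast
  qed
  have F: "F = (\<lambda>\<rho>. hdown Hd k \<rho> +
      (\<Sum>i\<in>UNIV. \<Sum>j\<in>{1..k i - 1}. (1/2) * (\<rho> i j)^2 * (R i (A i j) - R i (A i (j - 1)))))"
    unfolding F_def Hd_def ..
  show ?thesis
    unfolding level_point_def[symmetric]
  proof (intro conjI allI)
    show "fconvex (dec_set k)" by (rule fconvex_dec_set)
    show "fconvex_on (dec_set k) F"
      unfolding F using ginc
      by (intro fconvex_on_add fconvex_on_hdown[OF SM kpos] fconvex_on_weighted_squares) simp
    fix lam :: real
    have "level_point k \<rho>s lam \<in> grid k" by (rule level_point_in_grid[OF kpos])
    moreover have "Hd (level_point k \<rho>s lam) + lam * Rdsum (level_point k \<rho>s lam) \<le> Hd x + lam * Rdsum x"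
      if "x \<in> grid k" for x
      unfolding Rdsum_def using level_point_minimizes[OF SM kpos ginc \<rho>s_mem \<rho>s_min[unfolded F] that] .
    ultimately show "let xlam = level_point k \<rho>s lam in xlam \<in> grid k \<and>
        (\<forall>x\<in>grid k. Hd xlam + lam * Rdsum xlam \<le> Hd x + lam * Rdsum x)"
      by simp
  qed
qed

end
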